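(* For all $m,n\ge0$, the space $W_{m,n}$ is spanned by the vectors $$v_{\alpha,\beta}=\prod_{j=1}^m\bar e_{\alpha_j+2(m-j)+1-n}\prod_{j=1}^n\bar f_{\beta_j+2(n-j)+1}\,\bar v,$$ where $\alpha=(\alpha_1\ge\cdots\ge\alpha_m\ge0)$ and $\beta=(\beta_1\ge\cdots\ge\beta_n\ge0)$ range over sequences of nonnegative integers.
   Context: Let $\mathcal H$ be the Lie algebra with basis $\bar e_i,\bar h_i,\bar f_i$ ($i\in\mathbb Z$), brackets $[\bar e_i,\bar f_j]=\bar h_{i+j}$ and all other brackets of basis elements zero. Let $\mathcal H^-$ be spanned by basis elements of index $\le0$, and $M_{\mathcal H}=U(\mathcal H)\otimes_{U(\mathcal H^-)}\mathbb C\bar v$ induced from the trivial one-dimensional $\mathcal H^-$-module. With $\bar e(z)=\sum_i\bar e_iz^i$, etc., $W$ is the quotient of $M_{\mathcal H}$ by the span of all $z$-coefficients of $\bar e(z)^2u,\bar f(z)^2u,\bar e(z)\bar h(z)u,\bar f(z)\bar h(z)u,\bar h(z)^2u$, $u\in M_{\mathcal H}$ (we write $\bar v$ also for its image). $W$ is $\mathbb Z^3$-graded by $\deg\bar v=(0,0,0)$, $\deg\bar e_i=(1,0,i)$, $\deg\bar h_i=(1,1,i)$, $\deg\bar f_i=(0,1,i)$; $W_{m,n}$ is the sum of the components whose first two degrees are $(m,n)$. *)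

theory Defs
  imports Complex_Main
begin

text \<open>Generators of the Lie algebra H: Ge i = e_i, Gh i = h_i, Gf i = f_i.\<close>
datatype gen = Ge int | Gh int | Gf int

fun gidx :: "gen \<Rightarrow> int" where
  "gidx (Ge i) = i" | "gidx (Gh i) = i" | "gidx (Gf i) = i"

text \<open>Elements of the free associative algebra on the generators are
  (finitely supported) functions from words to complex coefficients.
  A word w acting on the vector v represents w v.\<close>
type_synonym elt = "gen list \<Rightarrow> complex"

definition single :: "gen list \<Rightarrow> elt" where
  "single w = (\<lambda>u. if u = w then 1 else 0)"

inductive_set cspan :: "elt set \<Rightarrow> elt set" for S :: "elt set" where
  zero: "(\<lambda>_. 0) \<in> cspan S"
| gen: "x \<in> S \<Longrightarrow> x \<in> cspan S"
| add: "x \<in> cspan S \<Longrightarrow> y \<in> cspan S \<Longrightarrow> (\<lambda>w. x w + y w) \<in> cspan S"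
| smult: "x \<in> cspan S \<Longrightarrow> (\<lambda>w. c * x w) \<in> cspan S"

fun brk :: "gen \<Rightarrow> gen \<Rightarrow> gen list \<Rightarrow> gen list \<Rightarrow> elt" where
  "brk (Ge i) (Gf j) a b = single (a @ [Gh (i + j)] @ b)"
| "brk (Gf j) (Ge i) a b = (\<lambda>u. - single (a @ [Gh (i + j)] @ b) u)"
| "brk _ _ a b = (\<lambda>_. 0)"

text \<open>Generators of the kernel of the map  free algebra \<rightarrow> M_H, a \<mapsto> a v:
  the two-sided ideal defining U(H), and the left ideal generated by H^-.\<close>
definition R0gens :: "elt set" where
  "R0gens =
     {(\<lambda>u. single (a @ [x, y] @ b) u - single (a @ [y, x] @ b) u - brk x y a b u)
        | a b x y. True}
   \<union> {single (a @ [x]) | a x. gidx x \<le> 0}"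

text \<open>The z^k coefficient of X(z)Y(z) b v, i.e. the sum over i+j=k of X_i Y_j b v.
  This is a finite sum in M_H; it is represented by the truncation to the window
  k-M \<le> i \<le> M, for any M beyond which all terms vanish in M_H.\<close>
definition coeffRel :: "(int \<Rightarrow> gen) \<Rightarrow> (int \<Rightarrow> gen) \<Rightarrow> elt set" where
  "coeffRel X Y =
     {(\<lambda>u. \<Sum>i\<in>{k - M..M}. single ([X i, Y (k - i)] @ b) u) | k M b.
        \<forall>i. i \<notin> {k - M..M} \<longrightarrow> single ([X i, Y (k - i)] @ b) \<in> cspan R0gens}"

definition RWgens :: "elt set" where
  "RWgens = coeffRel Ge Ge \<union> coeffRel Gf Gf \<union> coeffRel Ge Gh \<union> coeffRel Gf Gh
            \<union> coeffRel Gh Gh"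

text \<open>Kernel generators of the map free algebra \<rightarrow> W.\<close>
definition Wrels :: "elt set" where
  "Wrels = R0gens \<union> RWgens"

text \<open>First two components of the Z^3-degree of a word.\<close>
definition deg2 :: "gen list \<Rightarrow> nat \<times> nat" where
  "deg2 w = (length (filter (\<lambda>g. case g of Gf _ \<Rightarrow> False | _ \<Rightarrow> True) w),
             length (filter (\<lambda>g. case g of Ge _ \<Rightarrow> False | _ \<Rightarrow> True) w))"

text \<open>The word of v_{alpha,beta} (0-indexed: j' = j - 1).\<close>
definition vword :: "nat \<Rightarrow> nat \<Rightarrow> nat list \<Rightarrow> nat list \<Rightarrow> gen list" where
  "vword m n \<alpha> \<beta> =
     map (\<lambda>j. Ge (int (\<alpha> ! j) + 2 * (int m - 1 - int j) + 1 - int n)) [0..<m]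
     @ map (\<lambda>j. Gf (int (\<beta> ! j) + 2 * (int n - 1 - int j) + 1)) [0..<n]"

definition Vset :: "nat \<Rightarrow> nat \<Rightarrow> elt set" where
  "Vset m n = {single (vword m n \<alpha> \<beta>) | \<alpha> \<beta>.
       length \<alpha> = m \<and> sorted_wrt (\<ge>) \<alpha> \<and> length \<beta> = n \<and> sorted_wrt (\<ge>) \<beta>}"

end

theory Submission
  imports Defs "HOL-Library.Function_Algebras" "HOL-Library.Multiset"
begin

text \<open>
  We compute in the free algebra modulo the span of the relations. Every word can be brought
  into the ordered form \<open>e_a1 ... e_am f_b1 ... f_bn\<close>: \<open>f_j e_i\<close> is reordered at the cost of
  \<open>h_(i+j)\<close>, and \<open>h_c\<close> is replaced by \<open>e_a f_(c-a)\<close> with \<open>a\<close> so small that \<open>f_(c-a) e_a\<close> kills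
  what follows. Modes of one field commute, so only the multisets of the \<open>a\<close>'s and \<open>b\<close>'s
  matter, and \<open>f_b v = 0\<close> for \<open>b \<le> 0\<close>. A factor \<open>e_a\<close> with \<open>a \<le> -n\<close> is removed by an
  alternating sum over subsets \<open>S\<close> of the \<open>f\<close>'s (raise \<open>a\<close> by \<open>|S|\<close>, lower the indices in \<open>S\<close>
  by one), which decreases the sum of the \<open>b\<close>'s. Two \<open>a\<close>'s, or two \<open>b\<close>'s, at distance at most 1
  are expressed, by the left multiples of the relation \<open>e(z)^2 = 0\<close> resp. \<open>f(z)^2 = 0\<close>,
  through pairs with the same sum and a larger sum of squares, which is bounded. What remains
  are index sequences with gaps at least 2 and entries above \<open>-n\<close> resp. \<open>0\<close>: the indices of the
  vectors \<open>v_\<alpha>,\<beta>\<close>.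
\<close>

section \<open>Linear spans\<close>

definition scale :: "complex \<Rightarrow> elt \<Rightarrow> elt" where
  "scale c x = (\<lambda>w. c * x w)"

lemma scale_0 [simp]: "scale 0 x = 0"
  and scale_1 [simp]: "scale 1 x = x"
  and scale_neg1 [simp]: "scale (- 1) x = - x"
  by (simp_all add: scale_def fun_eq_iff)

lemma sum_fun_apply: "(\<Sum>i\<in>I. f i) u = (\<Sum>i\<in>I. f i u)"
  by (induction I rule: infinite_finite_induct) auto

lemma scale_sum: "scale c (\<Sum>i\<in>I. f i) = (\<Sum>i\<in>I. scale c (f i))"
  by (simp add: scale_def fun_eq_iff sum_fun_apply sum_distrib_left)

lemma cspan_0 [simp]: "0 \<in> cspan S"
  using cspan.zero[of S] by (simp add: zero_fun_def)

lemma cspan_add: "x \<in> cspan S \<Longrightarrow> y \<in> cspan S \<Longrightarrow> x + y \<in> cspan S"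
  using cspan.add[of x S y] by (simp add: plus_fun_def)

lemma cspan_scale: "x \<in> cspan S \<Longrightarrow> scale c x \<in> cspan S"
  using cspan.smult[of x S c] by (simp add: scale_def)

lemma cspan_uminus: "x \<in> cspan S \<Longrightarrow> - x \<in> cspan S"
  using cspan_scale[of x S "- 1"] by simp

lemma cspan_diff: "x \<in> cspan S \<Longrightarrow> y \<in> cspan S \<Longrightarrow> x - y \<in> cspan S"
  using cspan_add[of x S "- y"] cspan_uminus[of y S] by simp

lemma cspan_sum: "(\<And>i. i \<in> I \<Longrightarrow> f i \<in> cspan S) \<Longrightarrow> (\<Sum>i\<in>I. f i) \<in> cspan S"
  by (induction I rule: infinite_finite_induct) (auto intro: cspan_add)

lemma cspan_subset_cspan: "S \<subseteq> cspan T \<Longrightarrow> cspan S \<subseteq> cspan T"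
proof
  fix x assume "S \<subseteq> cspan T" and "x \<in> cspan S"
  from this(2) show "x \<in> cspan T"
    by induction (use \<open>S \<subseteq> cspan T\<close> in \<open>auto intro: cspan.intros\<close>)
qed

lemma cspan_mono: "S \<subseteq> T \<Longrightarrow> cspan S \<subseteq> cspan T"
  by (rule cspan_subset_cspan) (auto intro: cspan.gen)

lemma cspan_diff_trans: "x - y \<in> cspan S \<Longrightarrow> y - z \<in> cspan S \<Longrightarrow> x - z \<in> cspan S"
  using cspan_add[of "x - y" S "y - z"] by simp

lemma cspan_diff_sym: "x - y \<in> cspan S \<Longrightarrow> y - x \<in> cspan S"
  using cspan_uminus[of "x - y" S] by simp

lemma cspan_of_diff: "x - y \<in> cspan S \<Longrightarrow> y \<in> cspan S \<Longrightarrow> x \<in> cspan S"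
  using cspan_add[of "x - y" S y] by simp

lemma cspan_diff_cancel: "x - y \<in> cspan S \<Longrightarrow> x \<in> cspan S \<Longrightarrow> y \<in> cspan S"
  using cspan_diff[of x S "x - y"] by simp

lemma cspan_R0gens_subset_Wrels: "cspan R0gens \<subseteq> cspan Wrels"
  by (rule cspan_mono) (auto simp: Wrels_def)

lemma cspan_R0gens_subset: "cspan R0gens \<subseteq> cspan (Wrels \<union> V)"
  by (rule cspan_mono) (auto simp: Wrels_def)

lemma cspan_Wrels_subset: "cspan Wrels \<subseteq> cspan (Wrels \<union> V)"
  by (rule cspan_mono) auto

lemma cspan_of_diff_R0gens:
  "x - y \<in> cspan R0gens \<Longrightarrow> y \<in> cspan (Wrels \<union> V) \<Longrightarrow> x \<in> cspan (Wrels \<union> V)"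
  using cspan_R0gens_subset cspan_of_diff by blast

section \<open>The relations of \<open>M_H\<close>\<close>

definition bracket_coeff :: "gen \<Rightarrow> gen \<Rightarrow> complex" where
  "bracket_coeff g g' = (case (g, g') of (Ge _, Gf _) \<Rightarrow> 1 | (Gf _, Ge _) \<Rightarrow> -1 | _ \<Rightarrow> 0)"

lemma brk_eq_scale:
  "brk g g' a b = scale (bracket_coeff g g') (single (a @ [Gh (gidx g + gidx g')] @ b))"
  by (cases g; cases g') (auto simp: bracket_coeff_def scale_def fun_eq_iff add.commute)

lemma single_swap:
  "single (a @ [g, g'] @ b) - single (a @ [g', g] @ b)
     - scale (bracket_coeff g g') (single (a @ [Gh (gidx g + gidx g')] @ b)) \<in> cspan R0gens"
proof -
  have "single (a @ [g, g'] @ b) - single (a @ [g', g] @ b) - brk g g' a b \<in> R0gens"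
    unfolding R0gens_def by (auto simp: fun_eq_iff)
  then show ?thesis
    unfolding brk_eq_scale by (rule cspan.gen)
qed

lemma single_swap_commuting:
  "bracket_coeff g g' = 0 \<Longrightarrow> single (a @ [g, g'] @ b) - single (a @ [g', g] @ b) \<in> cspan R0gens"
  using single_swap[of a g g' b] by simp

lemma single_nonpos_last: "gidx g \<le> 0 \<Longrightarrow> single (a @ [g]) \<in> cspan R0gens"
  unfolding R0gens_def by (blast intro: cspan.gen)

definition index_norm :: "gen list \<Rightarrow> int" where
  "index_norm w = (\<Sum>g\<leftarrow>w. \<bar>gidx g\<bar>)"

lemma index_norm_simps [simp]:
  "index_norm [] = 0"
  "index_norm (g # w) = \<bar>gidx g\<bar> + index_norm w"
  "index_norm (u @ w) = index_norm u + index_norm w"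
  by (simp_all add: index_norm_def)

lemma index_norm_nonneg: "index_norm w \<ge> 0"
  by (induction w) auto

text \<open>Commuting \<open>g\<close> to the right end, where it kills \<open>v\<close>, only produces modes \<open>h_c\<close> whose
  index is again at most minus the norm of what remains to their right.\<close>

lemma single_low_mode: "gidx g \<le> - index_norm r \<Longrightarrow> single (P @ [g] @ r) \<in> cspan R0gens"
proof (induction r arbitrary: P g)
  case Nil
  then show ?case using single_nonpos_last[of g P] by simp
next
  case (Cons g' r)
  have "single ((P @ [g']) @ [g] @ r) \<in> cspan R0gens"
    using Cons.IH[of g "P @ [g']"] Cons.prems index_norm_nonneg[of r] by auto
  moreover have "single (P @ [Gh (gidx g + gidx g')] @ r) \<in> cspan R0gens"
    using Cons.IH[of "Gh (gidx g + gidx g')" P] Cons.prems by auto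
  ultimately have "single (P @ [g', g] @ r)
      + scale (bracket_coeff g g') (single (P @ [Gh (gidx g + gidx g')] @ r)) \<in> cspan R0gens"
    by (auto intro: cspan_add cspan_scale)
  moreover have "single (P @ [g, g'] @ r) - (single (P @ [g', g] @ r)
      + scale (bracket_coeff g g') (single (P @ [Gh (gidx g + gidx g')] @ r))) \<in> cspan R0gens"
    using single_swap[of P g g' r] by (simp add: diff_diff_eq)
  ultimately show ?case
    using cspan_of_diff by simp
qed

section \<open>Coefficient relations\<close>

definition commuting_fields :: "(int \<Rightarrow> gen) \<Rightarrow> (int \<Rightarrow> gen) \<Rightarrow> bool" where
  "commuting_fields X Y \<longleftrightarrow>
     (X, Y) \<in> {(Ge, Ge), (Gf, Gf), (Gh, Gh), (Ge, Gh), (Gh, Ge), (Gf, Gh), (Gh, Gf)}"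

definition relation_fields :: "(int \<Rightarrow> gen) \<Rightarrow> (int \<Rightarrow> gen) \<Rightarrow> bool" where
  "relation_fields X Y \<longleftrightarrow> (X, Y) \<in> {(Ge, Ge), (Gf, Gf), (Ge, Gh), (Gf, Gh), (Gh, Gh)}"

lemma commuting_fields_bracket_coeff:
  "commuting_fields X Y \<Longrightarrow> bracket_coeff (X i) (Y j) = 0"
  by (auto simp: commuting_fields_def bracket_coeff_def)

lemma commuting_fields_gidx: "commuting_fields X Y \<Longrightarrow> gidx (X i) = i \<and> gidx (Y i) = i"
  by (auto simp: commuting_fields_def)

lemma commuting_fields_Gh:
  "commuting_fields X Y \<Longrightarrow> commuting_fields Gh Y \<and> commuting_fields X Gh"
  by (auto simp: commuting_fields_def)

lemma commuting_fields_sym: "commuting_fields X Y \<Longrightarrow> commuting_fields Y X"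
  by (auto simp: commuting_fields_def)

lemma commuting_fields_cases:
  "commuting_fields X Y \<Longrightarrow> relation_fields X Y \<or> relation_fields Y X"
  by (auto simp: commuting_fields_def relation_fields_def)

lemma relation_fields_commuting: "relation_fields X Y \<Longrightarrow> commuting_fields X Y"
  by (auto simp: commuting_fields_def relation_fields_def)

lemma relation_fields_coeffRel: "relation_fields X Y \<Longrightarrow> coeffRel X Y \<subseteq> Wrels"
  unfolding relation_fields_def Wrels_def RWgens_def by auto

lemma bracket_coeff_field_const:
  "commuting_fields X Y \<Longrightarrow> bracket_coeff g (X i) = bracket_coeff g (X 0)"
  by (cases g) (auto simp: commuting_fields_def bracket_coeff_def)

text \<open>The coefficient of \<open>z^k\<close> in \<open>P X(z) Y(z) r v\<close>, truncated to \<open>lo \<le> i \<le> hi\<close>.\<close>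

definition coeff_window ::
    "gen list \<Rightarrow> (int \<Rightarrow> gen) \<Rightarrow> (int \<Rightarrow> gen) \<Rightarrow> int \<Rightarrow> int \<Rightarrow> int \<Rightarrow> gen list \<Rightarrow> elt" where
  "coeff_window P X Y k lo hi r = (\<Sum>i\<in>{lo..hi}. single (P @ [X i, Y (k - i)] @ r))"

lemma single_pair_low_mode:
  assumes XY: "commuting_fields X Y" and low: "i \<le> - index_norm r \<or> k - i \<le> - index_norm r"
  shows "single (P @ [X i, Y (k - i)] @ r) \<in> cspan R0gens"
proof (cases "k - i \<le> - index_norm r")
  case True
  then show ?thesis
    using single_low_mode[of "Y (k - i)" r "P @ [X i]"] commuting_fields_gidx[OF XY] by simp
next
  case False
  then have "single ((P @ [Y (k - i)]) @ [X i] @ r) \<in> cspan R0gens"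
    using low single_low_mode[of "X i" r "P @ [Y (k - i)]"] commuting_fields_gidx[OF XY] by simp
  then show ?thesis
    using cspan_of_diff single_swap_commuting commuting_fields_bracket_coeff[OF XY] by fastforce
qed

lemma coeff_window_extend:
  assumes XY: "commuting_fields X Y" and sub: "{lo..hi} \<subseteq> {lo'..hi'}"
    and lo: "lo \<le> - index_norm r" and hi: "k + index_norm r \<le> hi"
  shows "coeff_window P X Y k lo' hi' r - coeff_window P X Y k lo hi r \<in> cspan R0gens"
proof -
  have "coeff_window P X Y k lo' hi' r - coeff_window P X Y k lo hi r
      = (\<Sum>i\<in>{lo'..hi'} - {lo..hi}. single (P @ [X i, Y (k - i)] @ r))"
    unfolding coeff_window_def by (simp add: sum.subset_diff[OF sub])
  also have "\<dots> \<in> cspan R0gens"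
    by (rule cspan_sum, rule single_pair_low_mode[OF XY]) (use lo hi in auto)
  finally show ?thesis .
qed

lemma coeff_window_relation:
  assumes XY: "relation_fields X Y" and lo: "lo \<le> - index_norm r" and hi: "k + index_norm r \<le> hi"
  shows "coeff_window [] X Y k lo hi r \<in> cspan Wrels"
proof -
  note comm = relation_fields_commuting[OF XY]
  define M where "M = max hi (k - lo)"
  have "i \<le> - index_norm r \<or> k - i \<le> - index_norm r" if "i \<notin> {k - M..M}" for i
    using that lo hi by (auto simp: M_def)
  then have "\<forall>i. i \<notin> {k - M..M} \<longrightarrow> single ([X i, Y (k - i)] @ r) \<in> cspan R0gens"
    using single_pair_low_mode[OF comm, of _ r k "[]"] by simp
  then have "(\<lambda>u. \<Sum>i\<in>{k - M..M}. single ([X i, Y (k - i)] @ r) u) \<in> coeffRel X Y"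
    unfolding coeffRel_def by blast
  then have "coeff_window [] X Y k (k - M) M r \<in> cspan Wrels"
    using relation_fields_coeffRel[OF XY]
    by (auto simp: coeff_window_def sum_fun_apply[abs_def] intro: cspan.gen)
  moreover have "coeff_window [] X Y k (k - M) M r - coeff_window [] X Y k lo hi r \<in> cspan Wrels"
    using coeff_window_extend[OF comm _ lo hi, of "k - M" M "[]"] cspan_R0gens_subset_Wrels
    by (force simp: M_def)
  ultimately show ?thesis
    by (rule cspan_diff_cancel[rotated])
qed

lemma coeff_window_flip:
  assumes XY: "commuting_fields X Y"
  shows "coeff_window P X Y k lo hi r - coeff_window P Y X k (k - hi) (k - lo) r \<in> cspan R0gens"
proof -
  have "coeff_window P Y X k (k - hi) (k - lo) r = (\<Sum>i\<in>{lo..hi}. single (P @ [Y (k - i), X i] @ r))"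
    unfolding coeff_window_def
    by (rule sum.reindex_bij_witness[where i="\<lambda>i. k - i" and j="\<lambda>i. k - i"]) auto
  then have "coeff_window P X Y k lo hi r - coeff_window P Y X k (k - hi) (k - lo) r
      = (\<Sum>i\<in>{lo..hi}. single (P @ [X i, Y (k - i)] @ r) - single (P @ [Y (k - i), X i] @ r))"
    unfolding coeff_window_def by (simp add: sum_subtractf)
  also have "\<dots> \<in> cspan R0gens"
    by (intro cspan_sum single_swap_commuting commuting_fields_bracket_coeff[OF XY])
  finally show ?thesis .
qed

lemma coeff_window_base:
  assumes XY: "commuting_fields X Y" and lo: "lo \<le> - index_norm r" and hi: "k + index_norm r \<le> hi"
  shows "coeff_window [] X Y k lo hi r \<in> cspan Wrels"
  using commuting_fields_cases[OF XY]
proof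
  assume "relation_fields Y X"
  then have "coeff_window [] Y X k (k - hi) (k - lo) r \<in> cspan Wrels"
    by (rule coeff_window_relation) (use lo hi in auto)
  then show ?thesis
    using coeff_window_flip[OF XY] cspan_R0gens_subset_Wrels cspan_of_diff by blast
qed (use coeff_window_relation lo hi in blast)

lemma single_commute_past_pair:
  "single (P @ [g, x, y] @ r) - single (P @ [x, y, g] @ r)
     - scale (bracket_coeff g x) (single (P @ [Gh (gidx g + gidx x), y] @ r))
     - scale (bracket_coeff g y) (single (P @ [x, Gh (gidx g + gidx y)] @ r)) \<in> cspan R0gens"
proof -
  have "single (P @ [g, x] @ y # r) - single (P @ [x, g] @ y # r)
        - scale (bracket_coeff g x) (single (P @ [Gh (gidx g + gidx x)] @ y # r))
      + (single ((P @ [x]) @ [g, y] @ r) - single ((P @ [x]) @ [y, g] @ r)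
        - scale (bracket_coeff g y) (single ((P @ [x]) @ [Gh (gidx g + gidx y)] @ r)))
      \<in> cspan R0gens"
    by (intro cspan_add single_swap)
  then show ?thesis
    by (simp add: algebra_simps)
qed

text \<open>\<open>[g, X(z) Y(z)] = [g, X(z)] Y(z) + X(z) [g, Y(z)]\<close>, and both brackets are multiples of
  \<open>h(z)\<close>; so left multiples of coefficient relations are again coefficient relations.\<close>

lemma coeff_window_commute_past:
  assumes XY: "commuting_fields X Y"
  shows "coeff_window (P @ [g]) X Y k lo hi r - coeff_window P X Y k lo hi (g # r)
     - scale (bracket_coeff g (X 0)) (coeff_window P Gh Y (k + gidx g) (lo + gidx g) (hi + gidx g) r)
     - scale (bracket_coeff g (Y 0)) (coeff_window P X Gh (k + gidx g) lo hi r) \<in> cspan R0gens"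
proof -
  define j where "j = gidx g"
  have shift: "coeff_window P Gh Y (k + j) (lo + j) (hi + j) r
      = (\<Sum>i\<in>{lo..hi}. single (P @ [Gh (j + i), Y (k - i)] @ r))"
    unfolding coeff_window_def
    by (rule sum.reindex_bij_witness[where i="\<lambda>i. i + j" and j="\<lambda>i. i - j"]) (auto simp: algebra_simps)
  define cX cY where "cX = bracket_coeff g (X 0)" and "cY = bracket_coeff g (Y 0)"
  have c: "bracket_coeff g (X i) = cX" "bracket_coeff g (Y i) = cY" for i
    unfolding cX_def cY_def using bracket_coeff_field_const[OF XY]
      bracket_coeff_field_const[OF commuting_fields_sym[OF XY]] by blast+
  have "coeff_window (P @ [g]) X Y k lo hi r - coeff_window P X Y k lo hi (g # r)
      - scale (bracket_coeff g (X 0)) (coeff_window P Gh Y (k + j) (lo + j) (hi + j) r)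
      - scale (bracket_coeff g (Y 0)) (coeff_window P X Gh (k + j) lo hi r)
    = (\<Sum>i\<in>{lo..hi}. single (P @ [g, X i, Y (k - i)] @ r) - single (P @ [X i, Y (k - i), g] @ r)
      - scale (bracket_coeff g (X i)) (single (P @ [Gh (gidx g + gidx (X i)), Y (k - i)] @ r))
      - scale (bracket_coeff g (Y (k - i))) (single (P @ [X i, Gh (gidx g + gidx (Y (k - i)))] @ r)))"
    unfolding shift cX_def[symmetric] cY_def[symmetric] c
    using commuting_fields_gidx[OF XY]
    by (simp add: coeff_window_def scale_sum sum_subtractf sum.distrib j_def algebra_simps)
  also have "\<dots> \<in> cspan R0gens"
    by (intro cspan_sum single_commute_past_pair)
  finally show ?thesis
    unfolding j_def .
qed

lemma coeff_window_in_Wrels: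
  "commuting_fields X Y \<Longrightarrow> lo \<le> - index_norm (P @ r) \<Longrightarrow> k + index_norm (P @ r) \<le> hi
    \<Longrightarrow> coeff_window P X Y k lo hi r \<in> cspan Wrels"
proof (induction P arbitrary: X Y k lo hi r rule: rev_induct)
  case Nil
  then show ?case
    using coeff_window_base by simp
next
  case (snoc g P)
  have "coeff_window P X Y k lo hi (g # r) \<in> cspan Wrels"
    using snoc.IH[of X Y lo "g # r" k hi] snoc.prems by simp
  moreover have "coeff_window P Gh Y (k + gidx g) (lo + gidx g) (hi + gidx g) r \<in> cspan Wrels"
    using snoc.IH[of Gh Y "lo + gidx g" r "k + gidx g" "hi + gidx g"] snoc.prems
      commuting_fields_Gh by simp
  moreover have "coeff_window P X Gh (k + gidx g) lo hi r \<in> cspan Wrels"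
    using snoc.IH[of X Gh lo r "k + gidx g" hi] snoc.prems commuting_fields_Gh by simp
  ultimately have "coeff_window P X Y k lo hi (g # r)
      + scale (bracket_coeff g (X 0)) (coeff_window P Gh Y (k + gidx g) (lo + gidx g) (hi + gidx g) r)
      + scale (bracket_coeff g (Y 0)) (coeff_window P X Gh (k + gidx g) lo hi r) \<in> cspan Wrels"
    by (intro cspan_add cspan_scale)
  then show ?case
    using coeff_window_commute_past[OF snoc.prems(1), of P g k lo hi r] cspan_R0gens_subset_Wrels
      cspan_of_diff by (fastforce simp: diff_diff_eq)
qed

text \<open>The coefficient relation for \<open>X(z)\<^sup>2\<close> expresses the pair \<open>(x, y)\<close> through all other
  pairs with the same sum; for \<open>x \<noteq> y\<close> both \<open>(x, y)\<close> and \<open>(y, x)\<close> occur, and they agree up to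
  commutation, whence the factor \<open>1/2\<close>.\<close>

lemma single_pair_from_others:
  assumes XX: "commuting_fields X X"
    and others: "\<And>i. i \<noteq> x \<Longrightarrow> i \<noteq> y \<Longrightarrow> single (P @ [X i, X (x + y - i)] @ r) \<in> cspan (Wrels \<union> V)"
  shows "single (P @ [X x, X y] @ r) \<in> cspan (Wrels \<union> V)"
proof -
  define lo hi where "lo = min (min x y) (- index_norm (P @ r))"
    and "hi = max (max x y) (x + y + index_norm (P @ r))"
  define f where "f i = single (P @ [X i, X (x + y - i)] @ r)" for i
  have window: "(\<Sum>i\<in>{lo..hi}. f i) \<in> cspan (Wrels \<union> V)"
    using coeff_window_in_Wrels[OF XX, of lo P r "x + y" hi] cspan_Wrels_subset
    unfolding lo_def hi_def f_def coeff_window_def by auto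
  have rest: "(\<Sum>i\<in>{lo..hi} - {x, y}. f i) \<in> cspan (Wrels \<union> V)"
    using others by (intro cspan_sum) (auto simp: f_def)
  have sub: "{x, y} \<subseteq> {lo..hi}"
    unfolding lo_def hi_def by auto
  have "(\<Sum>i\<in>{lo..hi}. f i) - (\<Sum>i\<in>{lo..hi} - {x, y}. f i) = (\<Sum>i\<in>{x, y}. f i)"
    by (simp add: sum.subset_diff[OF sub])
  then have pair: "(\<Sum>i\<in>{x, y}. f i) \<in> cspan (Wrels \<union> V)"
    using cspan_diff[OF window rest] by simp
  show ?thesis
  proof (cases "x = y")
    case True
    then show ?thesis
      using pair by (simp add: f_def)
  next
    case False
    have swap: "f y - f x \<in> cspan (Wrels \<union> V)"
      using single_swap_commuting[OF commuting_fields_bracket_coeff[OF XX], of P y x r]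
        cspan_R0gens_subset by (auto simp: f_def)
    have "f x + f y \<in> cspan (Wrels \<union> V)"
      using pair False by simp
    then have "scale (1 / 2) ((f x + f y) - (f y - f x)) \<in> cspan (Wrels \<union> V)"
      by (rule cspan_scale[OF cspan_diff[OF _ swap]])
    moreover have "scale (1 / 2) ((f x + f y) - (f y - f x)) = f x"
      by (simp add: scale_def fun_eq_iff)
    ultimately show ?thesis
      unfolding f_def by simp
  qed
qed

section \<open>Ordered words\<close>

abbreviation ef_word :: "int list \<Rightarrow> int list \<Rightarrow> gen list" where
  "ef_word A B \<equiv> map Ge A @ map Gf B"

lemma single_map_move_front:
  assumes XX: "commuting_fields X X"
  shows "single (P @ map X (A @ [a] @ B) @ r) - single (P @ map X (a # A @ B) @ r) \<in> cspan R0gens"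
proof (induction A arbitrary: P)
  case (Cons a' A)
  have "single ((P @ [X a']) @ map X (A @ [a] @ B) @ r)
      - single ((P @ [X a']) @ map X (a # A @ B) @ r) \<in> cspan R0gens"
    by (rule Cons.IH)
  moreover have "single (P @ [X a', X a] @ map X (A @ B) @ r)
      - single (P @ [X a, X a'] @ map X (A @ B) @ r) \<in> cspan R0gens"
    by (intro single_swap_commuting commuting_fields_bracket_coeff[OF XX])
  ultimately show ?case
    by (simp only: append_assoc map_append append.simps list.map cspan_diff_trans)
qed simp

lemma single_map_perm:
  assumes XX: "commuting_fields X X"
  shows "mset A = mset A' \<Longrightarrow> single (P @ map X A @ r) - single (P @ map X A' @ r) \<in> cspan R0gens"
proof (induction A arbitrary: A' P)
  case (Cons a A)
  then obtain A1 A2 where A': "A' = A1 @ a # A2"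
    by (metis list.set_intros(1) set_mset_mset split_list)
  with Cons.prems have "mset A = mset (A1 @ A2)"
    by simp
  then have "single ((P @ [X a]) @ map X A @ r) - single ((P @ [X a]) @ map X (A1 @ A2) @ r)
      \<in> cspan R0gens"
    by (rule Cons.IH)
  moreover have "single (P @ map X (a # A1 @ A2) @ r) - single (P @ map X (A1 @ [a] @ A2) @ r)
      \<in> cspan R0gens"
    by (rule cspan_diff_sym, rule single_map_move_front[OF XX])
  ultimately show ?case
    unfolding A' by (simp only: append_assoc map_append append.simps list.map cspan_diff_trans)
qed simp

lemma single_Ge_past_Gfs:
  "c \<le> 0 \<Longrightarrow> single (P @ Ge c # map Gf B)
     - (\<Sum>t<length B. single (P @ map Gf (take t B) @ Gh (c + B ! t) # map Gf (drop (Suc t) B)))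
     \<in> cspan R0gens"
proof (induction B arbitrary: P)
  case Nil
  then show ?case
    using single_nonpos_last[of "Ge c" P] by simp
next
  case (Cons b B)
  define hs where "hs B' P' = (\<Sum>t<length B'.
      single (P' @ map Gf (take t B') @ Gh (c + B' ! t) # map Gf (drop (Suc t) B')))" for B' P'
  have "hs (b # B) P = single (P @ [Gh (c + b)] @ map Gf B) + hs B (P @ [Gf b])"
    unfolding hs_def length_Cons sum.lessThan_Suc_shift by simp
  then have "single (P @ Ge c # map Gf (b # B)) - hs (b # B) P
      = (single ((P @ [Gf b]) @ Ge c # map Gf B) - hs B (P @ [Gf b]))
      + (single (P @ [Ge c, Gf b] @ map Gf B) - single (P @ [Gf b, Ge c] @ map Gf B)
        - scale (bracket_coeff (Ge c) (Gf b))
            (single (P @ [Gh (gidx (Ge c) + gidx (Gf b))] @ map Gf B)))"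
    by (simp add: bracket_coeff_def)
  also have "\<dots> \<in> cspan R0gens"
    unfolding hs_def by (intro cspan_add single_swap Cons.IH Cons.prems)
  finally show ?case
    unfolding hs_def .
qed

definition decrement_at :: "nat set \<Rightarrow> int list \<Rightarrow> int list" where
  "decrement_at S B = map (\<lambda>j. B ! j - (if j \<in> S then 1 else 0)) [0..<length B]"

lemma length_decrement_at [simp]: "length (decrement_at S B) = length B"
  by (simp add: decrement_at_def)

lemma decrement_at_empty [simp]: "decrement_at {} B = B"
  by (simp add: decrement_at_def map_nth)

lemma sum_list_decrement_at:
  assumes "S \<subseteq> {0..<length B}"
  shows "sum_list (decrement_at S B) = sum_list B - int (card S)"
proof -
  have "sum_list (decrement_at S B)
      = (\<Sum>j<length B. B ! j) - (\<Sum>j\<in>{0..<length B}. if j \<in> S then 1 else 0)"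
    by (simp add: decrement_at_def sum_list_sum_nth sum_subtractf atLeast0LessThan)
  also have "(\<Sum>j\<in>{0..<length B}. if j \<in> S then 1 else 0) = int (card S)"
    using assms by (simp add: sum.If_cases Int_absorb1)
  finally show ?thesis
    by (simp add: sum_list_sum_nth atLeast0LessThan)
qed

lemma alternating_sum_Pow_eq_0:
  assumes "finite A" "t \<in> A" and invariant: "\<And>S. S \<subseteq> A \<Longrightarrow> t \<notin> S \<Longrightarrow> f (insert t S) = f S"
  shows "(\<Sum>S\<in>Pow A. scale ((-1) ^ card S) (f S)) = 0"
proof -
  define A' where "A' = A - {t}"
  have A: "A = insert t A'" and "t \<notin> A'" "finite A'"
    using assms(1,2) by (auto simp: A'_def)
  have inj: "inj_on (insert t) (Pow A')"
    using \<open>t \<notin> A'\<close> by (auto intro!: inj_onI simp: insert_ident)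
  have "(\<Sum>S\<in>Pow A. scale ((-1) ^ card S) (f S))
      = (\<Sum>S\<in>Pow A'. scale ((-1) ^ card S) (f S))
        + (\<Sum>S\<in>Pow A'. scale ((-1) ^ card (insert t S)) (f (insert t S)))"
    unfolding A Pow_insert using \<open>t \<notin> A'\<close> \<open>finite A'\<close> inj
    by (subst sum.union_disjoint) (auto simp: sum.reindex)
  also have "(\<Sum>S\<in>Pow A'. scale ((-1) ^ card (insert t S)) (f (insert t S)))
      = - (\<Sum>S\<in>Pow A'. scale ((-1) ^ card S) (f S))"
    unfolding sum_negf[symmetric]
  proof (rule sum.cong)
    fix S assume "S \<in> Pow A'"
    then have "S \<subseteq> A" "t \<notin> S" "finite S"
      using \<open>t \<notin> A'\<close> \<open>finite A'\<close> A finite_subset by auto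
    then show "scale ((-1) ^ card (insert t S)) (f (insert t S)) = - scale ((-1) ^ card S) (f S)"
      using invariant by (simp add: scale_def fun_eq_iff)
  qed simp
  finally show ?thesis
    by (simp add: zero_fun_def)
qed

text \<open>Commute \<open>e_(a+|S|)\<close> to the right end, where it kills \<open>v\<close>. The term with \<open>h\<close> in position
  \<open>t\<close> does not change when \<open>t\<close> is added to or removed from \<open>S\<close>, so these terms cancel in
  the alternating sum over \<open>S\<close>.\<close>

lemma alternating_Ge_sum:
  assumes low: "a + int (length B) \<le> 0"
  shows "(\<Sum>S\<in>Pow {0..<length B}.
      scale ((-1) ^ card S) (single (P @ Ge (a + int (card S)) # map Gf (decrement_at S B))))
    \<in> cspan R0gens"
proof -
  define h where "h S t = single (P @ map Gf (take t (decrement_at S B))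
      @ Gh (a + int (card S) + decrement_at S B ! t) # map Gf (drop (Suc t) (decrement_at S B)))" for S t
  define w where "w S = single (P @ Ge (a + int (card S)) # map Gf (decrement_at S B))" for S
  have expand: "w S - (\<Sum>t<length B. h S t) \<in> cspan R0gens" if "S \<in> Pow {0..<length B}" for S
  proof -
    have "card S \<le> length B"
      using that card_mono[of "{0..<length B}" S] by auto
    then show ?thesis
      using single_Ge_past_Gfs[of "a + int (card S)" P "decrement_at S B"] low
      unfolding w_def h_def by simp
  qed
  have h_insert: "h (insert t S) t = h S t" if "t < length B" "S \<subseteq> {0..<length B}" "t \<notin> S" for S t
  proof -
    have "take t (decrement_at (insert t S) B) = take t (decrement_at S B)"
      "drop (Suc t) (decrement_at (insert t S) B) = drop (Suc t) (decrement_at S B)"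
      using that by (simp_all add: decrement_at_def take_map drop_map)
    moreover have "card (insert t S) = Suc (card S)"
      using that finite_subset by fastforce
    ultimately show ?thesis
      using that by (simp add: h_def decrement_at_def add.assoc)
  qed
  have "(\<Sum>S\<in>Pow {0..<length B}. scale ((-1) ^ card S) (\<Sum>t<length B. h S t))
      = (\<Sum>t<length B. \<Sum>S\<in>Pow {0..<length B}. scale ((-1) ^ card S) (h S t))"
    by (simp add: scale_sum sum.swap[of _ "Pow {0..<length B}"])
  also have "\<dots> = 0"
    using h_insert by (intro sum.neutral ballI alternating_sum_Pow_eq_0) auto
  finally have cancel: "(\<Sum>S\<in>Pow {0..<length B}. scale ((-1) ^ card S) (\<Sum>t<length B. h S t)) = 0" .
  have "(\<Sum>S\<in>Pow {0..<length B}. scale ((-1) ^ card S) (w S))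
      = (\<Sum>S\<in>Pow {0..<length B}. scale ((-1) ^ card S) (w S - (\<Sum>t<length B. h S t)))
        + (\<Sum>S\<in>Pow {0..<length B}. scale ((-1) ^ card S) (\<Sum>t<length B. h S t))"
    by (simp add: sum.distrib[symmetric] scale_def fun_eq_iff sum_fun_apply algebra_simps)
  also have "\<dots> \<in> cspan R0gens"
    unfolding cancel using expand by (auto intro!: cspan_sum cspan_scale)
  finally show ?thesis
    unfolding w_def .
qed

lemma single_ef_nonpos_Gf:
  assumes "b \<in> set B" "b \<le> 0"
  shows "single (ef_word A B) \<in> cspan R0gens"
proof -
  have "mset B = mset (remove1 b B @ [b])"
    using assms(1) by simp
  then have "single (ef_word A B) - single (map Ge A @ map Gf (remove1 b B @ [b]) @ [])
      \<in> cspan R0gens"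
    using single_map_perm[of Gf B "remove1 b B @ [b]" "map Ge A" "[]"]
    by (simp add: commuting_fields_def)
  moreover have "single (map Ge A @ map Gf (remove1 b B @ [b]) @ []) \<in> cspan R0gens"
    using single_nonpos_last[of "Gf b" "ef_word A (remove1 b B)"] assms(2) by simp
  ultimately show ?thesis
    using cspan_of_diff by simp
qed

lemma single_ef_low_Ge:
  assumes smaller: "\<And>A' B'. length A' = length A \<Longrightarrow> length B' = length B
      \<Longrightarrow> sum_list B' < sum_list B \<Longrightarrow> single (ef_word A' B') \<in> cspan (Wrels \<union> V)"
    and a: "a \<in> set A" "a + int (length B) \<le> 0"
  shows "single (ef_word A B) \<in> cspan (Wrels \<union> V)"
proof -
  define A1 where "A1 = remove1 a A"
  define F where "F S = scale ((-1) ^ card S)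
      (single (map Ge A1 @ Ge (a + int (card S)) # map Gf (decrement_at S B)))" for S
  have length_A1: "length (A1 @ [x]) = length A" for x
    using a(1) by (simp add: A1_def length_remove1) (metis Suc_pred length_pos_if_in_set)
  have "F S \<in> cspan (Wrels \<union> V)" if "S \<in> Pow {0..<length B} - {{}}" for S
  proof -
    have "S \<subseteq> {0..<length B}" "S \<noteq> {}"
      using that by auto
    then have "sum_list (decrement_at S B) < sum_list B"
      using sum_list_decrement_at finite_subset card_gt_0_iff by fastforce
    then show ?thesis
      using smaller[of "A1 @ [a + int (card S)]" "decrement_at S B"] length_A1
      unfolding F_def by (simp add: cspan_scale)
  qed
  then have "(\<Sum>S\<in>Pow {0..<length B} - {{}}. F S) \<in> cspan (Wrels \<union> V)"
    by (rule cspan_sum)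
  moreover have "(\<Sum>S\<in>Pow {0..<length B}. F S) \<in> cspan (Wrels \<union> V)"
    using alternating_Ge_sum[OF a(2), of "map Ge A1"] cspan_R0gens_subset unfolding F_def by auto
  moreover have "(\<Sum>S\<in>Pow {0..<length B}. F S) = F {} + (\<Sum>S\<in>Pow {0..<length B} - {{}}. F S)"
    by (rule sum.remove) auto
  ultimately have "single (ef_word (A1 @ [a]) B) \<in> cspan (Wrels \<union> V)"
    using cspan_diff by (fastforce simp: F_def)
  moreover have "mset A = mset (A1 @ [a])"
    using a(1) by (simp add: A1_def)
  ultimately show ?thesis
    using single_map_perm[of Ge A "A1 @ [a]" "[]" "map Gf B"] cspan_of_diff_R0gens
    by (simp add: commuting_fields_def)
qed

section \<open>Sums of squares and close pairs\<close>

definition sum_sq :: "int list \<Rightarrow> int" where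
  "sum_sq L = (\<Sum>a\<leftarrow>L. a\<^sup>2)"

lemma sum_sq_Cons [simp]: "sum_sq (a # L) = a\<^sup>2 + sum_sq L"
  by (simp add: sum_sq_def)

lemma sum_sq_mset: "mset L = mset L' \<Longrightarrow> sum_sq L = sum_sq L'"
  unfolding sum_sq_def by (metis mset_map sum_mset_sum_list)

lemma sum_list_mset: "mset L = mset L' \<Longrightarrow> sum_list L = (sum_list L' :: int)"
  by (metis sum_mset_sum_list)

lemma member_le_sum_list_lower_bound:
  fixes L :: "int list"
  assumes lower: "\<forall>b\<in>set L. c \<le> b" and a: "a \<in> set L"
  shows "a \<le> sum_list L - (int (length L) - 1) * c"
proof -
  have "int (length (remove1 a L)) * c \<le> sum_list (remove1 a L)"
    using sum_list_mono[of "remove1 a L" "\<lambda>_. c" "\<lambda>x. x"] lower set_remove1_subset[of a L]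
    by (auto simp: sum_list_triv)
  moreover have "sum_list L = a + sum_list (remove1 a L)"
    using sum_list_map_remove1[OF a, of "\<lambda>x. x"] by simp
  moreover have "int (length (remove1 a L)) = int (length L) - 1"
    using length_pos_if_in_set[OF a] by (simp add: length_remove1 a of_nat_diff Suc_le_eq)
  ultimately show ?thesis
    by (simp add: algebra_simps)
qed

lemma sum_sq_bounded:
  assumes lower: "\<forall>b\<in>set L. c \<le> b"
  shows "sum_sq L \<le> int (length L) * (\<bar>sum_list L\<bar> + int (length L) * \<bar>c\<bar>)\<^sup>2"
proof -
  define U where "U = \<bar>sum_list L\<bar> + int (length L) * \<bar>c\<bar>"
  have "a\<^sup>2 \<le> U\<^sup>2" if a: "a \<in> set L" for a
  proof -
    have "a \<le> sum_list L - (int (length L) - 1) * c"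
      by (rule member_le_sum_list_lower_bound[OF lower a])
    moreover have "\<bar>(int (length L) - 1) * c\<bar> \<le> int (length L) * \<bar>c\<bar>"
      using length_pos_if_in_set[OF a] by (simp add: abs_mult mult_right_mono)
    moreover have "c \<le> a"
      using a lower by auto
    moreover have "\<bar>c\<bar> \<le> int (length L) * \<bar>c\<bar>"
      using mult_right_mono[of 1 "int (length L)" "\<bar>c\<bar>"] length_pos_if_in_set[OF a] by simp
    ultimately have "\<bar>a\<bar> \<le> U"
      unfolding U_def by (simp add: abs_le_iff) linarith
    then show ?thesis
      by (metis abs_ge_zero order_trans power2_abs power_mono)
  qed
  then have "sum_sq L \<le> (\<Sum>a\<leftarrow>L. U\<^sup>2)"
    unfolding sum_sq_def by (rule sum_list_mono)
  then show ?thesis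
    by (simp add: sum_list_triv U_def)
qed

lemma power2_sum_less_spread:
  fixes x y i :: int
  assumes "\<bar>x - y\<bar> \<le> 1" "i \<noteq> x" "i \<noteq> y"
  shows "x\<^sup>2 + y\<^sup>2 < i\<^sup>2 + (x + y - i)\<^sup>2"
proof -
  have "0 < (i - x) * (i - y)"
    using assms by (cases "i < x") (auto intro: mult_pos_pos mult_neg_neg)
  moreover have "i\<^sup>2 + (x + y - i)\<^sup>2 - (x\<^sup>2 + y\<^sup>2) = 2 * ((i - x) * (i - y))"
    by (simp add: power2_eq_square algebra_simps)
  ultimately show ?thesis
    by linarith
qed

definition has_close_pair :: "int list \<Rightarrow> bool" where
  "has_close_pair L \<longleftrightarrow> (\<exists>x y R. mset L = mset (x # y # R) \<and> \<bar>x - y\<bar> \<le> 1)"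

lemma has_close_pair_mset: "mset L = mset L' \<Longrightarrow> has_close_pair L \<longleftrightarrow> has_close_pair L'"
  by (simp add: has_close_pair_def)

lemma single_map_close_pair:
  assumes XX: "commuting_fields X X" and close: "has_close_pair L"
    and spread: "\<And>L'. length L' = length L \<Longrightarrow> sum_list L' = sum_list L \<Longrightarrow> sum_sq L < sum_sq L'
      \<Longrightarrow> single (P @ map X L' @ r) \<in> cspan (Wrels \<union> V)"
  shows "single (P @ map X L @ r) \<in> cspan (Wrels \<union> V)"
proof -
  obtain x y R where L: "mset L = mset (x # y # R)" and xy: "\<bar>x - y\<bar> \<le> 1"
    using close unfolding has_close_pair_def by blast
  have "single (P @ [X x, X y] @ map X R @ r) \<in> cspan (Wrels \<union> V)"
  proof (rule single_pair_from_others[OF XX])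
    fix i assume "i \<noteq> x" "i \<noteq> y"
    then have "sum_sq L < sum_sq (i # (x + y - i) # R)"
      using sum_sq_mset[OF L] power2_sum_less_spread[OF xy] by simp
    moreover have "length (i # (x + y - i) # R) = length L"
      "sum_list (i # (x + y - i) # R) = sum_list L"
      using mset_eq_length[OF L] sum_list_mset[OF L] by simp_all
    ultimately show "single (P @ [X i, X (x + y - i)] @ map X R @ r) \<in> cspan (Wrels \<union> V)"
      using spread by fastforce
  qed
  then show ?thesis
    using single_map_perm[OF XX L, of P r] cspan_of_diff_R0gens by simp
qed

lemma gap_sorted_if_no_close_pair:
  "sorted_wrt (\<ge>) L \<Longrightarrow> \<not> has_close_pair L \<Longrightarrow> sorted_wrt (\<lambda>a b. b + 2 \<le> a) L"
proof (induction L rule: induct_list012)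
  case (3 x y R)
  have "\<not> has_close_pair (y # R)"
    using "3.prems"(2) unfolding has_close_pair_def
    by (metis add_mset_commute mset.simps(2))
  moreover have "y + 2 \<le> x"
    using "3.prems" unfolding has_close_pair_def by force
  moreover have "transp (\<lambda>a b :: int. b + 2 \<le> a)"
    by (auto simp: transp_def)
  ultimately show ?case
    using "3.IH"(2) "3.prems"(1) sorted_wrt2 by fastforce
qed simp_all

lemma gap_sorted_nth:
  assumes "sorted_wrt (\<lambda>a b. b + 2 \<le> a) L" "i \<le> j" "j < length L"
  shows "L ! j + 2 * (int j - int i) \<le> L ! i"
  using assms(2,3)
proof (induction j)
  case (Suc j)
  show ?case
  proof (cases "i = Suc j")
    case False
    then have "L ! j + 2 * (int j - int i) \<le> L ! i"
      using Suc by simp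
    moreover have "L ! Suc j + 2 \<le> L ! j"
      using sorted_wrt_nth_less[OF assms(1), of j "Suc j"] Suc.prems by simp
    ultimately show ?thesis
      by simp
  qed simp
qed simp

lemma gap_sorted_staircase:
  assumes gaps: "sorted_wrt (\<lambda>a b. b + 2 \<le> a) L" and lower: "\<forall>a\<in>set L. c < a"
  obtains \<gamma> where "length \<gamma> = length L" "sorted_wrt (\<ge>) \<gamma>"
    "\<And>j. j < length L \<Longrightarrow> L ! j = int (\<gamma> ! j) + 2 * (int (length L) - 1 - int j) + 1 + c"
proof
  define N where "N = length L"
  define \<gamma> where "\<gamma> = map (\<lambda>j. nat (L ! j - 2 * (int N - 1 - int j) - 1 - c)) [0..<N]"
  have nonneg: "0 \<le> L ! j - 2 * (int N - 1 - int j) - 1 - c" if "j < N" for j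
  proof -
    have "L ! (N - 1) + 2 * (int (N - 1) - int j) \<le> L ! j"
      using gap_sorted_nth[OF gaps, of j "N - 1"] that by (simp add: N_def)
    moreover have "c < L ! (N - 1)"
      using lower that by (simp add: N_def)
    ultimately show ?thesis
      using that by (simp add: of_nat_diff)
  qed
  show "length \<gamma> = length L"
    by (simp add: \<gamma>_def N_def)
  show "sorted_wrt (\<ge>) \<gamma>"
    unfolding sorted_wrt_iff_nth_less
  proof (intro allI impI)
    fix i j assume "i < j" "j < length \<gamma>"
    then show "\<gamma> ! j \<le> \<gamma> ! i"
      using gap_sorted_nth[OF gaps, of i j] by (simp add: \<gamma>_def N_def nat_mono)
  qed
  show "L ! j = int (\<gamma> ! j) + 2 * (int (length L) - 1 - int j) + 1 + c" if "j < length L" for j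
    using nonneg[of j] that by (simp add: \<gamma>_def N_def)
qed

lemma single_ef_in_Vset:
  assumes "length A = m" "length B = n"
    and "sorted_wrt (\<lambda>a b. b + 2 \<le> a) A" "sorted_wrt (\<lambda>a b. b + 2 \<le> a) B"
    and "\<forall>a\<in>set A. - int n < a" "\<forall>b\<in>set B. 0 < b"
  shows "single (ef_word A B) \<in> Vset m n"
proof -
  obtain \<alpha> where \<alpha>: "length \<alpha> = m" "sorted_wrt (\<ge>) \<alpha>"
    "\<And>j. j < m \<Longrightarrow> A ! j = int (\<alpha> ! j) + 2 * (int m - 1 - int j) + 1 - int n"
    using gap_sorted_staircase[OF assms(3,5)] assms(1) by (metis add_uminus_conv_diff)
  obtain \<beta> where \<beta>: "length \<beta> = n" "sorted_wrt (\<ge>) \<beta>"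
    "\<And>j. j < n \<Longrightarrow> B ! j = int (\<beta> ! j) + 2 * (int n - 1 - int j) + 1"
    using gap_sorted_staircase[OF assms(4,6)] assms(2) by (metis add.right_neutral)
  have "vword m n \<alpha> \<beta> = ef_word A B"
    unfolding vword_def using assms(1,2) \<alpha>(3) \<beta>(3)
    by (intro arg_cong2[where f = append] nth_equalityI) auto
  then show ?thesis
    unfolding Vset_def using \<alpha>(1,2) \<beta>(1,2) by force
qed

section \<open>Reduction to the vectors \<open>v_\<alpha>,\<beta>\<close>\<close>

lemma single_ef_low_index:
  assumes smaller: "\<And>A' B'. length A' = length A \<Longrightarrow> length B' = length B
      \<Longrightarrow> sum_list B' < sum_list B \<Longrightarrow> single (ef_word A' B') \<in> cspan (Wrels \<union> V)"
    and low: "(\<exists>b\<in>set B. b \<le> 0) \<or> (\<exists>a\<in>set A. a + int (length B) \<le> 0)"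
  shows "single (ef_word A B) \<in> cspan (Wrels \<union> V)"
  using low single_ef_nonpos_Gf cspan_R0gens_subset single_ef_low_Ge[OF smaller] by blast

lemma single_ef_separated:
  assumes "length A = m" "length B = n"
    and "\<not> has_close_pair A" "\<not> has_close_pair B"
    and "\<forall>a\<in>set A. - int n < a" "\<forall>b\<in>set B. 0 < b"
  shows "single (ef_word A B) \<in> cspan (Wrels \<union> Vset m n)"
proof -
  define A' B' where "A' = rev (sort A)" and "B' = rev (sort B)"
  have mset: "mset A = mset A'" "mset B = mset B'"
    by (simp_all add: A'_def B'_def)
  have "single (ef_word A' B') \<in> Vset m n"
  proof (rule single_ef_in_Vset)
    show "length A' = m" "length B' = n"
      using assms(1,2) by (simp_all add: A'_def B'_def)
    have "sorted_wrt (\<ge>) A'" "sorted_wrt (\<ge>) B'"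
      by (simp_all add: A'_def B'_def sorted_wrt_rev)
    then show "sorted_wrt (\<lambda>a b. b + 2 \<le> a) A'" "sorted_wrt (\<lambda>a b. b + 2 \<le> a) B'"
      using assms(3,4) has_close_pair_mset[OF mset(1)] has_close_pair_mset[OF mset(2)]
      by (simp_all add: gap_sorted_if_no_close_pair)
    show "\<forall>a\<in>set A'. - int n < a" "\<forall>b\<in>set B'. 0 < b"
      using assms(5,6) by (simp_all add: A'_def B'_def)
  qed
  then have "single (map Ge A' @ map Gf B' @ []) \<in> cspan (Wrels \<union> Vset m n)"
    by (simp add: cspan.gen)
  then have "single ([] @ ef_word A' B) \<in> cspan (Wrels \<union> Vset m n)"
    using single_map_perm[of Gf B B' "map Ge A'" "[]"] mset(2) cspan_of_diff_R0gens
    by (simp add: commuting_fields_def)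
  then show ?thesis
    using single_map_perm[of Ge A A' "[]" "map Gf B"] mset(1) cspan_of_diff_R0gens
    by (simp add: commuting_fields_def)
qed

lemma single_ef_of_spread:
  assumes lengths: "length A = m" "length B = n"
    and lower: "\<forall>a\<in>set A. - int n < a" "\<forall>b\<in>set B. 0 < b"
    and spread: "\<And>A' B'. length A' = m \<Longrightarrow> length B' = n
      \<Longrightarrow> sum_list A' = sum_list A \<Longrightarrow> sum_list B' = sum_list B
      \<Longrightarrow> sum_sq A + sum_sq B < sum_sq A' + sum_sq B'
      \<Longrightarrow> single (ef_word A' B') \<in> cspan (Wrels \<union> Vset m n)"
  shows "single (ef_word A B) \<in> cspan (Wrels \<union> Vset m n)"
proof -
  consider "has_close_pair A" | "has_close_pair B" | "\<not> has_close_pair A" "\<not> has_close_pair B"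
    by blast
  then show ?thesis
  proof cases
    case 1
    have "single ([] @ ef_word A B) \<in> cspan (Wrels \<union> Vset m n)"
      using single_map_close_pair[of Ge A "[]" "map Gf B"] 1 spread lengths
      by (simp add: commuting_fields_def)
    then show ?thesis
      by simp
  next
    case 2
    have "single (map Ge A @ map Gf B @ []) \<in> cspan (Wrels \<union> Vset m n)"
      using single_map_close_pair[of Gf B "map Ge A" "[]"] 2 spread lengths
      by (simp add: commuting_fields_def)
    then show ?thesis
      by simp
  next
    case 3
    then show ?thesis
      using single_ef_separated lengths lower by blast
  qed
qed

text \<open>Bounds \<open>sum_sq A + sum_sq B\<close> when \<open>sum_list A = s\<close>, \<open>sum_list B = t\<close> and the entries are at
  least \<open>1 - n\<close> resp. \<open>1\<close>; as spreading a close pair raises the sum of squares, this makes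
  the spreading terminate.\<close>

definition ef_sum_sq_bound :: "nat \<Rightarrow> nat \<Rightarrow> int \<Rightarrow> int \<Rightarrow> int" where
  "ef_sum_sq_bound m n s t = int m * (\<bar>s\<bar> + int m * \<bar>1 - int n\<bar>)\<^sup>2 + int n * (\<bar>t\<bar> + int n)\<^sup>2"

lemma single_ef_in_span_of_smaller:
  fixes A B :: "int list"
  assumes "length A = m" "length B = n" "sum_list B = t"
    and smaller: "\<And>A' B'. length A' = m \<Longrightarrow> length B' = n \<Longrightarrow> sum_list B' < t
      \<Longrightarrow> single (ef_word A' B') \<in> cspan (Wrels \<union> Vset m n)"
  shows "single (ef_word A B) \<in> cspan (Wrels \<union> Vset m n)"
  using assms(1-3)
proof (induction "nat (ef_sum_sq_bound m n (sum_list A) t - (sum_sq A + sum_sq B))"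
    arbitrary: A B rule: less_induct)
  case less
  have low_index: "single (ef_word A' B') \<in> cspan (Wrels \<union> Vset m n)"
    if "length A' = m" "length B' = n" "sum_list B' = t"
      "(\<exists>b\<in>set B'. b \<le> 0) \<or> (\<exists>a\<in>set A'. a + int n \<le> 0)" for A' B'
    using single_ef_low_index[of A' B'] smaller that by simp
  show ?case
  proof (cases "(\<exists>b\<in>set B. b \<le> 0) \<or> (\<exists>a\<in>set A. a + int n \<le> 0)")
    case True
    then show ?thesis
      using low_index less.prems by blast
  next
    case False
    then have "\<forall>a\<in>set A. - int n < a" "\<forall>b\<in>set B. 0 < b"
      by auto
    then show ?thesis
    proof (rule single_ef_of_spread[OF less.prems(1,2)])
      fix A' B' assume A'B': "length A' = m" "length B' = n" "sum_list A' = sum_list A"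
        "sum_list B' = sum_list B" "sum_sq A + sum_sq B < sum_sq A' + sum_sq B'"
      show "single (ef_word A' B') \<in> cspan (Wrels \<union> Vset m n)"
      proof (cases "(\<exists>b\<in>set B'. b \<le> 0) \<or> (\<exists>a\<in>set A'. a + int n \<le> 0)")
        case True
        then show ?thesis
          using low_index A'B' less.prems by simp
      next
        case False
        then have "sum_sq A' \<le> int m * (\<bar>sum_list A\<bar> + int m * \<bar>1 - int n\<bar>)\<^sup>2"
            "sum_sq B' \<le> int n * (\<bar>t\<bar> + int n)\<^sup>2"
          using sum_sq_bounded[of A' "1 - int n"] sum_sq_bounded[of B' 1] A'B' less.prems by force+
        then have "nat (ef_sum_sq_bound m n (sum_list A') t - (sum_sq A' + sum_sq B'))
            < nat (ef_sum_sq_bound m n (sum_list A) t - (sum_sq A + sum_sq B))"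
          using A'B' by (simp add: ef_sum_sq_bound_def)
        then show ?thesis
          using less.hyps A'B' less.prems by simp
      qed
    qed
  qed
qed

lemma single_ef_in_span:
  fixes A B :: "int list"
  assumes "length A = m" "length B = n"
  shows "single (ef_word A B) \<in> cspan (Wrels \<union> Vset m n)"
  using assms
proof (induction "nat (sum_list B)" arbitrary: A B rule: less_induct)
  case less
  show ?case
  proof (rule single_ef_in_span_of_smaller[OF less.prems refl])
    fix A' B' :: "int list"
    assume A'B': "length A' = m" "length B' = n" "sum_list B' < sum_list B"
    show "single (ef_word A' B') \<in> cspan (Wrels \<union> Vset m n)"
    proof (cases "\<exists>b\<in>set B'. b \<le> 0")
      case True
      then show ?thesis
        using single_ef_nonpos_Gf cspan_R0gens_subset by blast
    next
      case False
      then have "0 \<le> sum_list B'"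
        by (intro sum_list_nonneg) auto
      then show ?thesis
        using less.hyps A'B' by simp
    qed
  qed
qed

fun is_Ge :: "gen \<Rightarrow> bool" where
  "is_Ge (Ge _) = True"
| "is_Ge _ = False"

fun is_Gf :: "gen \<Rightarrow> bool" where
  "is_Gf (Gf _) = True"
| "is_Gf _ = False"

fun is_Gh :: "gen \<Rightarrow> bool" where
  "is_Gh (Gh _) = True"
| "is_Gh _ = False"

fun fe_inversions :: "gen list \<Rightarrow> nat" where
  "fe_inversions [] = 0"
| "fe_inversions (g # w) = (if is_Gf g then length (filter is_Ge w) else 0) + fe_inversions w"

lemma fe_inversions_append:
  "fe_inversions (u @ w)
    = fe_inversions u + length (filter is_Gf u) * length (filter is_Ge w) + fe_inversions w"
  by (induction u) (auto simp: algebra_simps)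

lemma h_free_word_cases:
  assumes "\<forall>g\<in>set w. \<not> is_Gh g"
  obtains A B where "w = ef_word A B"
  | P j i r where "w = P @ [Gf j, Ge i] @ r"
  using assms
proof (induction w arbitrary: thesis)
  case Nil
  then show ?case
    by (metis append_Nil list.map(1))
next
  case (Cons g w)
  show ?case
  proof (rule Cons.IH)
    fix P j i r assume "w = P @ [Gf j, Ge i] @ r"
    then show thesis
      using Cons.prems(2)[of "g # P"] by simp
  next
    fix A B assume w: "w = ef_word A B"
    show thesis
    proof (cases g)
      case (Ge i)
      then show thesis
        using Cons.prems(1)[of "i # A" B] w by simp
    next
      case (Gf j)
      show thesis
      proof (cases A)
        case Nil
        then show thesis
          using Cons.prems(1)[of "[]" "j # B"] w Gf by simp
      next
        case (Cons i A')
        then show thesis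
          using Cons.prems(2)[of "[]" j i "ef_word A' B"] w Gf by simp
      qed
    qed (use Cons.prems(3) in simp)
  qed (use Cons.prems(3) in simp)
qed

lemma single_Gh_as_Ge_Gf:
  assumes "a \<le> - index_norm r"
  shows "single (P @ [Gh c] @ r) - single (P @ [Ge a, Gf (c - a)] @ r) \<in> cspan R0gens"
proof -
  have low: "single ((P @ [Gf (c - a)]) @ [Ge a] @ r) \<in> cspan R0gens"
    using single_low_mode[of "Ge a" r "P @ [Gf (c - a)]"] assms by simp
  have swap: "single (P @ [Ge a, Gf (c - a)] @ r) - single (P @ [Gf (c - a), Ge a] @ r)
      - single (P @ [Gh c] @ r) \<in> cspan R0gens"
    using single_swap[of P "Ge a" "Gf (c - a)" r] by (simp add: bracket_coeff_def)
  show ?thesis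
    using cspan_diff[OF cspan_uminus[OF swap] low] by (simp add: algebra_simps)
qed

lemma deg2_append: "deg2 (u @ w) = (fst (deg2 u) + fst (deg2 w), snd (deg2 u) + snd (deg2 w))"
  by (simp add: deg2_def)

lemma deg2_ef: "deg2 (ef_word A B) = (length A, length B)"
  by (simp add: deg2_def filter_map comp_def)

text \<open>Reorder \<open>f_j e_i = e_i f_j - h_(i+j)\<close> and trade \<open>h_(i+j)\<close> for \<open>e_a f_(i+j-a)\<close> with \<open>a\<close> so
  low that \<open>f_(i+j-a) e_a\<close> kills the rest; both new words have fewer inversions.\<close>

lemma single_h_free_in_span:
  "\<forall>g\<in>set w. \<not> is_Gh g \<Longrightarrow> deg2 w = (m, n) \<Longrightarrow> single w \<in> cspan (Wrels \<union> Vset m n)"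
proof (induction "fe_inversions w" arbitrary: w rule: less_induct)
  case less
  from less.prems(1) show ?case
  proof (cases rule: h_free_word_cases)
    case (1 A B)
    then show ?thesis
      using single_ef_in_span less.prems(2) deg2_ef by simp
  next
    case (2 P j i r)
    define a where "a = - index_norm r"
    define w1 w2 h where "w1 = P @ [Ge i, Gf j] @ r" and "w2 = P @ [Ge a, Gf (j + i - a)] @ r"
      and "h = single (P @ [Gh (j + i)] @ r)"
    have "fe_inversions w1 < fe_inversions w" "fe_inversions w2 < fe_inversions w"
      "\<forall>g\<in>set w1. \<not> is_Gh g" "\<forall>g\<in>set w2. \<not> is_Gh g"
      "deg2 w1 = (m, n)" "deg2 w2 = (m, n)"
      using less.prems unfolding 2 w1_def w2_def
      by (simp_all add: fe_inversions_append deg2_append) (simp_all add: deg2_def)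
    then have w1: "single w1 \<in> cspan (Wrels \<union> Vset m n)"
      and w2: "single w2 \<in> cspan (Wrels \<union> Vset m n)"
      using less.hyps by blast+
    have "single w - single w1 - - h \<in> cspan R0gens"
      using single_swap[of P "Gf j" "Ge i" r] unfolding 2 w1_def h_def by (simp add: bracket_coeff_def)
    moreover have "h - single w2 \<in> cspan R0gens"
      using single_Gh_as_Ge_Gf[of a r P "j + i"] unfolding a_def w2_def h_def by simp
    ultimately have "(single w - single w1 - - h) - (h - single w2) + single w1 - single w2
        \<in> cspan (Wrels \<union> Vset m n)"
      using cspan_R0gens_subset w1 w2 by (meson cspan_add cspan_diff subsetD)
    then show ?thesis
      by (simp add: algebra_simps)
  qed
qed

lemma single_in_span: "deg2 w = (m, n) \<Longrightarrow> single w \<in> cspan (Wrels \<union> Vset m n)"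
proof (induction "length (filter is_Gh w)" arbitrary: w rule: less_induct)
  case less
  show ?case
  proof (cases "\<exists>g\<in>set w. is_Gh g")
    case False
    then show ?thesis
      using single_h_free_in_span less.prems by blast
  next
    case True
    then obtain P c r where w: "w = P @ Gh c # r"
      by (metis is_Gh.elims(2) split_list)
    define w' where "w' = P @ [Ge (- index_norm r), Gf (c + index_norm r)] @ r"
    have "length (filter is_Gh w') < length (filter is_Gh w)" "deg2 w' = (m, n)"
      using less.prems unfolding w w'_def
      by (simp_all add: deg2_append) (simp_all add: deg2_def)
    then have "single w' \<in> cspan (Wrels \<union> Vset m n)"
      by (rule less.hyps)
    then show ?thesis
      using single_Gh_as_Ge_Gf[of "- index_norm r" r P c] cspan_of_diff_R0gens
      unfolding w w'_def by simp
  qed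
qed

lemma eq_sum_single:
  assumes "finite {w. x w \<noteq> 0}"
  shows "x = (\<Sum>w | x w \<noteq> 0. scale (x w) (single w))"
proof
  fix u
  have "(\<Sum>w | x w \<noteq> 0. scale (x w) (single w)) u = (\<Sum>w | x w \<noteq> 0. if u = w then x w else 0)"
    by (auto simp: sum_fun_apply scale_def single_def intro!: sum.cong)
  also have "\<dots> = x u"
    using assms by (simp add: sum.delta)
  finally show "x u = (\<Sum>w | x w \<noteq> 0. scale (x w) (single w)) u"
    by simp
qed

theorem theorem4p1p1:
  fixes m n :: nat and x :: "gen list \<Rightarrow> complex"
  assumes "finite {w. x w \<noteq> 0}"
    and "\<forall>w. x w \<noteq> 0 \<longrightarrow> deg2 w = (m, n)"
  shows "x \<in> cspan (Wrels \<union> Vset m n)"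
proof (subst eq_sum_single[OF assms(1)])
  show "(\<Sum>w | x w \<noteq> 0. scale (x w) (single w)) \<in> cspan (Wrels \<union> Vset m n)"
    using assms(2) by (intro cspan_sum cspan_scale single_in_span) simp
qed

end
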